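(* Let $(\mathcal{X},d)$ be a finite metric space, $P$ a probability distribution on $\mathcal{X}$, $k\ge1$ an integer, $O\in\mathcal{X}_k$ an optimal $k$-RP solution, and $\rho\ge1$. Let $S\in\mathcal{X}_k$ be a $k$-multiset returned by a $\rho$-approximation algorithm for the uniform capacitated $k$-median objective, i.e., satisfying $d_W(D_S,P)\le \rho\cdot\min_{T\in\mathcal{X}_k} d_W(D_T,P)$. Then $$\mathbb{E}_{X\sim P_k}[d_k(S,X)]\le (\rho+2)\cdot \mathbb{E}_{X\sim P_k}[d_k(O,X)].$$
   Context: $\mathcal{X}_k$ is the set of multisets of exactly $k$ points of $\mathcal{X}$. For $U,V\in\mathcal{X}_k$, $d_k(U,V)$ is the minimum, over perfect matchings between the $k$ elements of $U$ and the $k$ elements of $V$ (with multiplicity), of the sum of the distances of matched pairs. $P_k$ is the distribution of the multiset of $k$ points drawn i.i.d. from $P$. The $k$-RP cost of $S\in\mathcal{X}_k$ is $\mathbb{E}_{X\sim P_k}[d_k(S,X)]$, and $O$ minimizes this cost. For $T\in\mathcal{X}_k$, $D_T$ is the probability distribution on $\mathcal{X}$ assigning to each $x$ its multiplicity in $T$ divided by $k$. $d_W$ denotes the Wasserstein-1 (earth mover's) distance between probability distributions on $(\mathcal{X},d)$. *)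

theory Defs
  imports "HOL-Probability.Probability"
begin

text \<open>The finite metric space is a finite type with class metric_space; distance is dist.\<close>

definition mset_k :: "nat \<Rightarrow> 'a multiset set" where
  "mset_k k = {U. size U = k}"

text \<open>Matching distance: minimum over perfect matchings (with multiplicity), expressed
  by pairing up enumerations xs of U and ys of V position by position.\<close>
definition dk :: "'a::metric_space multiset \<Rightarrow> 'a multiset \<Rightarrow> real" where
  "dk U V = Min {(\<Sum>i<size U. dist (xs ! i) (ys ! i)) | xs ys. mset xs = U \<and> mset ys = V}"

definition Pk :: "nat \<Rightarrow> 'a pmf \<Rightarrow> 'a multiset pmf" where
  "Pk k P = map_pmf mset (replicate_pmf k P)"

definition rp_cost :: "nat \<Rightarrow> 'a::metric_space pmf \<Rightarrow> 'a multiset \<Rightarrow> real" where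
  "rp_cost k P S = measure_pmf.expectation (Pk k P) (\<lambda>X. dk S X)"

definition DT :: "'a multiset \<Rightarrow> 'a pmf" where
  "DT T = pmf_of_multiset T"

definition couplings :: "'a pmf \<Rightarrow> 'a pmf \<Rightarrow> ('a \<times> 'a) pmf set" where
  "couplings \<mu> \<nu> = {\<pi>. map_pmf fst \<pi> = \<mu> \<and> map_pmf snd \<pi> = \<nu>}"

definition wasserstein :: "'a::metric_space pmf \<Rightarrow> 'a pmf \<Rightarrow> real" where
  "wasserstein \<mu> \<nu> = (INF \<pi>\<in>couplings \<mu> \<nu>. measure_pmf.expectation \<pi> (\<lambda>(x, y). dist x y))"

end

theory Submission
  imports Defs
begin

(* For k-multisets U, V the matching distance is k times the Wasserstein distance of the
   empirical distributions, d_k(U, V) = k W(D_U, D_V): an optimal matching is itself a coupling,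
   and conversely a coupling of D_U and D_V spreads out to a doubly stochastic k x k matrix on
   positions, whose cost is at least that of the cheapest permutation (Birkhoff-von Neumann, here
   via Hall's theorem).  Hence d_k satisfies the triangle inequality, so
   cost(S) <= d_k(S, O) + cost(O), and
   d_k(S, O) = k W(D_S, D_O) <= k (W(D_S, P) + W(D_O, P)) <= k (rho + 1) W(D_O, P).
   Finally k W(D_O, P) <= cost(O): gluing optimal matchings of O with the sample X ~ P_k gives a
   coupling of D_O with the mean of D_X, which is P. *)

section \<open>Hall's theorem and doubly stochastic matrices\<close>

lemma hall_condition_remove_point:
  assumes hall: "\<And>C. C \<subseteq> A \<Longrightarrow> card C \<le> card (\<Union>(N ` C))"
    and no_critical: "\<And>C. C \<subseteq> A \<Longrightarrow> C \<noteq> {} \<Longrightarrow> C \<noteq> A \<Longrightarrow> card C \<noteq> card (\<Union>(N ` C))"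
    and "a \<in> A" "B \<subseteq> A - {a}"
  shows "card B \<le> card (\<Union>((\<lambda>x. N x - {b}) ` B))"
proof (cases "B = {}")
  case False
  then have "card B < card (\<Union>(N ` B))"
    using hall[of B] no_critical[of B] assms(3,4) by fastforce
  moreover have "card (\<Union>(N ` B)) - 1 \<le> card (\<Union>(N ` B) - {b})"
    by (metis card_Diff_singleton_if diff_le_self order_refl)
  moreover have "\<Union>((\<lambda>x. N x - {b}) ` B) = \<Union>(N ` B) - {b}" by auto
  ultimately show ?thesis by simp
qed simp

lemma hall_condition_remove_critical:
  assumes hall: "\<And>C. C \<subseteq> A \<Longrightarrow> card C \<le> card (\<Union>(N ` C))"
    and fin: "finite A" "\<And>a. a \<in> A \<Longrightarrow> finite (N a)"
    and critical: "B \<subseteq> A" "card B = card (\<Union>(N ` B))" and "C \<subseteq> A - B"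
  shows "card C \<le> card (\<Union>((\<lambda>x. N x - \<Union>(N ` B)) ` C))"
proof -
  have "finite C" "finite B" using fin critical \<open>C \<subseteq> A - B\<close> finite_subset by blast+
  have fin_image: "finite (\<Union>(N ` D))" if "D \<subseteq> A" for D
    using that fin by (meson finite_UN_I finite_subset subsetD)
  have "card C + card B = card (C \<union> B)"
    using \<open>C \<subseteq> A - B\<close> \<open>finite C\<close> \<open>finite B\<close> by (subst card_Un_disjoint) auto
  also have "\<dots> \<le> card (\<Union>(N ` (C \<union> B)))" using \<open>C \<subseteq> A - B\<close> critical(1) by (intro hall) auto
  also have "\<Union>(N ` (C \<union> B)) = \<Union>((\<lambda>x. N x - \<Union>(N ` B)) ` C) \<union> \<Union>(N ` B)" by auto
  also have "card \<dots> = card (\<Union>((\<lambda>x. N x - \<Union>(N ` B)) ` C)) + card (\<Union>(N ` B))"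
    using fin_image[of C] fin_image[of B] \<open>C \<subseteq> A - B\<close> critical(1)
    by (intro card_Un_disjoint) (auto intro: finite_subset)
  finally show ?thesis using critical(2) by linarith
qed

lemma hall_marriage:
  assumes "finite A" "\<And>a. a \<in> A \<Longrightarrow> finite (N a)"
    and "\<And>B. B \<subseteq> A \<Longrightarrow> card B \<le> card (\<Union>(N ` B))"
  shows "\<exists>f. inj_on f A \<and> (\<forall>a\<in>A. f a \<in> N a)"
  using assms
proof (induction "card A" arbitrary: A N rule: less_induct)
  case less
  note fin = less.prems(1,2) and hall = less.prems(3)
  show ?case
  proof (cases "\<exists>B. B \<subseteq> A \<and> B \<noteq> {} \<and> B \<noteq> A \<and> card B = card (\<Union>(N ` B))")
    case False
    then have no_critical: "\<And>C. C \<subseteq> A \<Longrightarrow> C \<noteq> {} \<Longrightarrow> C \<noteq> A \<Longrightarrow> card C \<noteq> card (\<Union>(N ` C))"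
      by blast
    show ?thesis
    proof (cases "A = {}")
      case False
      then obtain a where a: "a \<in> A" by blast
      then have "N a \<noteq> {}" using hall[of "{a}"] fin by auto
      then obtain b where b: "b \<in> N a" by blast
      have "card (A - {a}) < card A" using fin(1) a by (rule card_Diff1_less)
      moreover have "finite (A - {a})" "\<And>x. x \<in> A - {a} \<Longrightarrow> finite (N x - {b})" using fin by auto
      moreover note hall_condition_remove_point[OF hall no_critical a]
      ultimately obtain f where f: "inj_on f (A - {a})" "\<forall>x\<in>A - {a}. f x \<in> N x - {b}"
        using less.hyps[of "A - {a}" "\<lambda>x. N x - {b}"] by blast
      have "inj_on (f(a := b)) (insert a (A - {a}))" using f by (auto simp: inj_on_def)
      then show ?thesis using f b a by (intro exI[of _ "f(a := b)"]) (auto simp: insert_absorb)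
    qed simp
  next
    case True
    then obtain B where critical: "B \<subseteq> A" "B \<noteq> {}" "B \<noteq> A" "card B = card (\<Union>(N ` B))" by blast
    have "card B < card A" using critical fin(1) by (meson psubsetI psubset_card_mono)
    moreover have "finite B" "\<And>x. x \<in> B \<Longrightarrow> finite (N x)" using fin critical(1) finite_subset by auto
    moreover have "\<And>C. C \<subseteq> B \<Longrightarrow> card C \<le> card (\<Union>(N ` C))" using hall critical(1) by auto
    ultimately obtain f\<^sub>1 where f\<^sub>1: "inj_on f\<^sub>1 B" "\<forall>x\<in>B. f\<^sub>1 x \<in> N x"
      using less.hyps[of B N] by blast
    have "A - B \<subset> A" using critical(1,2) by blast
    then have "card (A - B) < card A" using fin(1) by (meson psubset_card_mono)
    moreover have "finite (A - B)" "\<And>x. x \<in> A - B \<Longrightarrow> finite (N x - \<Union>(N ` B))" using fin by auto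
    moreover note hall_condition_remove_critical[OF hall fin critical(1,4)]
    ultimately obtain f\<^sub>2 where f\<^sub>2: "inj_on f\<^sub>2 (A - B)" "\<forall>x\<in>A - B. f\<^sub>2 x \<in> N x - \<Union>(N ` B)"
      using less.hyps[of "A - B" "\<lambda>x. N x - \<Union>(N ` B)"] by blast
    have "f\<^sub>1 ` B \<inter> f\<^sub>2 ` (A - B) = {}" using f\<^sub>1(2) f\<^sub>2(2) by fastforce
    then have "inj_on (\<lambda>x. if x \<in> B then f\<^sub>1 x else f\<^sub>2 x) (B \<union> (A - B))"
      using f\<^sub>1(1) f\<^sub>2(1) by (rule inj_on_disjoint_Un[rotated 2])
    moreover have "B \<union> (A - B) = A" using critical(1) by blast
    ultimately show ?thesis
      using f\<^sub>1(2) f\<^sub>2(2) by (intro exI[of _ "\<lambda>x. if x \<in> B then f\<^sub>1 x else f\<^sub>2 x"]) auto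
  qed
qed

lemma doubly_stochastic_positive_permutation:
  fixes M :: "nat \<Rightarrow> nat \<Rightarrow> real"
  assumes nonneg: "\<And>i j. i < k \<Longrightarrow> j < k \<Longrightarrow> 0 \<le> M i j"
    and rows: "\<And>i. i < k \<Longrightarrow> (\<Sum>j<k. M i j) = t"
    and cols: "\<And>j. j < k \<Longrightarrow> (\<Sum>i<k. M i j) = t"
    and "0 < t"
  obtains \<sigma> where "bij_betw \<sigma> {..<k} {..<k}" "\<And>i. i < k \<Longrightarrow> 0 < M i (\<sigma> i)"
proof -
  define N where "N i = {j. j < k \<and> 0 < M i j}" for i
  have "card B \<le> card (\<Union>(N ` B))" if B: "B \<subseteq> {..<k}" for B
  proof -
    have NB: "\<Union>(N ` B) \<subseteq> {..<k}" unfolding N_def by auto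
    have "t * card B = (\<Sum>i\<in>B. t)" by simp
    also have "\<dots> = (\<Sum>i\<in>B. \<Sum>j<k. M i j)" using rows B by (intro sum.cong) auto
    also have "\<dots> = (\<Sum>i\<in>B. \<Sum>j\<in>\<Union>(N ` B). M i j)"
    proof (rule sum.cong[OF refl])
      fix i assume "i \<in> B"
      then have "M i j = 0" if "j \<in> {..<k} - \<Union>(N ` B)" for j
        using that B nonneg[of i j] unfolding N_def by fastforce
      then show "(\<Sum>j<k. M i j) = (\<Sum>j\<in>\<Union>(N ` B). M i j)"
        using NB by (intro sum.mono_neutral_right) auto
    qed
    also have "\<dots> = (\<Sum>j\<in>\<Union>(N ` B). \<Sum>i\<in>B. M i j)" by (rule sum.swap)
    also have "\<dots> \<le> (\<Sum>j\<in>\<Union>(N ` B). \<Sum>i<k. M i j)"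
      using B NB nonneg by (intro sum_mono sum_mono2) auto
    also have "\<dots> = (\<Sum>j\<in>\<Union>(N ` B). t)" using cols NB by (intro sum.cong) auto
    also have "\<dots> = t * card (\<Union>(N ` B))" by simp
    finally show ?thesis using \<open>0 < t\<close> by simp
  qed
  then obtain \<sigma> where \<sigma>: "inj_on \<sigma> {..<k}" "\<forall>i\<in>{..<k}. \<sigma> i \<in> N i"
    using hall_marriage[of "{..<k}" N] unfolding N_def by auto
  then have "\<sigma> ` {..<k} = {..<k}" unfolding N_def by (intro endo_inj_surj) auto
  with \<sigma> show thesis using that unfolding N_def bij_betw_def by auto
qed

lemma permutation_matrix_sums:
  fixes k :: nat and \<theta> :: real
  assumes "bij_betw \<sigma> {..<k} {..<k}"
  shows "\<And>i. i < k \<Longrightarrow> (\<Sum>j<k. if j = \<sigma> i then \<theta> else 0) = \<theta>"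
    and "\<And>j. j < k \<Longrightarrow> (\<Sum>i<k. if j = \<sigma> i then \<theta> else 0) = \<theta>"
    and "(\<Sum>i<k. \<Sum>j<k. (if j = \<sigma> i then \<theta> else 0) * c i j) = \<theta> * (\<Sum>i<k. c i (\<sigma> i))"
proof -
  show "(\<Sum>j<k. if j = \<sigma> i then \<theta> else 0) = \<theta>" if "i < k" for i
  proof -
    have "\<sigma> i < k" using bij_betwE[OF assms] that by blast
    then show ?thesis by simp
  qed
  show "(\<Sum>i<k. if j = \<sigma> i then \<theta> else 0) = \<theta>" if "j < k" for j
    using sum.reindex_bij_betw[OF assms, of "\<lambda>i. if j = i then \<theta> else 0"] that by simp
  have "(\<Sum>i<k. \<Sum>j<k. (if j = \<sigma> i then \<theta> else 0) * c i j) = (\<Sum>i<k. \<Sum>j<k. if j = \<sigma> i then \<theta> * c i j else 0)"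
    by (intro sum.cong) auto
  also have "\<dots> = \<theta> * (\<Sum>i<k. c i (\<sigma> i))"
    using assms by (auto simp: bij_betw_def sum_distrib_left intro!: sum.cong)
  finally show "(\<Sum>i<k. \<Sum>j<k. (if j = \<sigma> i then \<theta> else 0) * c i j) = \<theta> * (\<Sum>i<k. c i (\<sigma> i))" .
qed

lemma card_support_subtract_permutation_less:
  fixes M :: "nat \<Rightarrow> nat \<Rightarrow> real"
  assumes "\<And>i. i < k \<Longrightarrow> 0 < M i (\<sigma> i)" "\<sigma> ` {..<k} \<subseteq> {..<k}" "i\<^sub>0 < k"
  shows "card {(i, j). i < k \<and> j < k \<and> M i j - (if j = \<sigma> i then M i\<^sub>0 (\<sigma> i\<^sub>0) else 0) \<noteq> 0}
    < card {(i, j). i < k \<and> j < k \<and> M i j \<noteq> 0}"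
proof (rule psubset_card_mono)
  show "finite {(i, j). i < k \<and> j < k \<and> M i j \<noteq> 0}"
    by (rule finite_subset[of _ "{..<k} \<times> {..<k}"]) auto
  have "M i\<^sub>0 (\<sigma> i\<^sub>0) \<noteq> 0" using assms(1)[OF assms(3)] by simp
  then have "(i\<^sub>0, \<sigma> i\<^sub>0) \<in> {(i, j). i < k \<and> j < k \<and> M i j \<noteq> 0}"
    using assms(2,3) by auto
  moreover have "(i\<^sub>0, \<sigma> i\<^sub>0) \<notin> {(i, j). i < k \<and> j < k \<and> M i j - (if j = \<sigma> i then M i\<^sub>0 (\<sigma> i\<^sub>0) else 0) \<noteq> 0}"
    by simp
  moreover have "{(i, j). i < k \<and> j < k \<and> M i j - (if j = \<sigma> i then M i\<^sub>0 (\<sigma> i\<^sub>0) else 0) \<noteq> 0}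
      \<subseteq> {(i, j). i < k \<and> j < k \<and> M i j \<noteq> 0}"
    using assms(1) by (force split: if_splits)
  ultimately show "{(i, j). i < k \<and> j < k \<and> M i j - (if j = \<sigma> i then M i\<^sub>0 (\<sigma> i\<^sub>0) else 0) \<noteq> 0}
      \<subset> {(i, j). i < k \<and> j < k \<and> M i j \<noteq> 0}"
    by blast
qed

lemma doubly_stochastic_cost_ge:
  fixes M c :: "nat \<Rightarrow> nat \<Rightarrow> real"
  assumes perm: "\<And>\<sigma>. bij_betw \<sigma> {..<k} {..<k} \<Longrightarrow> L \<le> (\<Sum>i<k. c i (\<sigma> i))"
  shows "\<lbrakk>\<And>i j. i < k \<Longrightarrow> j < k \<Longrightarrow> 0 \<le> M i j; \<And>i. i < k \<Longrightarrow> (\<Sum>j<k. M i j) = t;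
          \<And>j. j < k \<Longrightarrow> (\<Sum>i<k. M i j) = t; 0 \<le> t\<rbrakk>
         \<Longrightarrow> t * L \<le> (\<Sum>i<k. \<Sum>j<k. M i j * c i j)"
proof (induction "card {(i, j). i < k \<and> j < k \<and> M i j \<noteq> 0}" arbitrary: M t rule: less_induct)
  case less
  note nonneg = less.prems(1) and rows = less.prems(2) and cols = less.prems(3)
  consider "t = 0" | "k = 0" | "0 < t" "0 < k" using less.prems(4) by linarith
  then show ?case
  proof cases
    case 1
    have "M i j = 0" if "i < k" "j < k" for i j
    proof -
      have "(\<Sum>j<k. M i j) = 0" using rows[OF that(1)] 1 by simp
      then show ?thesis using sum_nonneg_eq_0_iff[of "{..<k}" "M i"] nonneg[OF that(1)] that(2) by blast
    qed
    then show ?thesis using 1 by simp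
  next
    case 2
    then show ?thesis using perm[of id] less.prems(4) by (simp add: mult_nonneg_nonpos)
  next
    case 3
    obtain \<sigma> where \<sigma>: "bij_betw \<sigma> {..<k} {..<k}" "\<And>i. i < k \<Longrightarrow> 0 < M i (\<sigma> i)"
      using doubly_stochastic_positive_permutation[OF nonneg rows cols 3(1)] by blast
    define i\<^sub>0 where "i\<^sub>0 = arg_min_on (\<lambda>i. M i (\<sigma> i)) {..<k}"
    have i\<^sub>0: "i\<^sub>0 < k" "\<And>i. i < k \<Longrightarrow> M i\<^sub>0 (\<sigma> i\<^sub>0) \<le> M i (\<sigma> i)"
      using arg_min_if_finite[of "{..<k}" "\<lambda>i. M i (\<sigma> i)"] 3(2) unfolding i\<^sub>0_def
      by (auto simp: not_less[symmetric])
    define \<theta> where "\<theta> = M i\<^sub>0 (\<sigma> i\<^sub>0)"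
    have "0 < \<theta>" using i\<^sub>0 \<sigma>(2) by (simp add: \<theta>_def)
    \<comment> \<open>removing \<theta> times the permutation matrix of \<sigma> keeps M doubly stochastic and kills an entry\<close>
    define M' where "M' i j = M i j - (if j = \<sigma> i then \<theta> else 0)" for i j
    have "(t - \<theta>) * L \<le> (\<Sum>i<k. \<Sum>j<k. M' i j * c i j)"
    proof (rule less.hyps)
      show "card {(i, j). i < k \<and> j < k \<and> M' i j \<noteq> 0} < card {(i, j). i < k \<and> j < k \<and> M i j \<noteq> 0}"
        using card_support_subtract_permutation_less[of k M \<sigma> i\<^sub>0] \<sigma> i\<^sub>0(1)
        unfolding M'_def \<theta>_def bij_betw_def by simp
      show "0 \<le> M' i j" if "i < k" "j < k" for i j
        using that nonneg i\<^sub>0(2) unfolding M'_def \<theta>_def by auto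
      show "(\<Sum>j<k. M' i j) = t - \<theta>" if "i < k" for i
        using rows[OF that] permutation_matrix_sums(1)[OF \<sigma>(1) that] unfolding M'_def by (simp add: sum_subtractf)
      show "(\<Sum>i<k. M' i j) = t - \<theta>" if "j < k" for j
        using cols[OF that] permutation_matrix_sums(2)[OF \<sigma>(1) that] unfolding M'_def by (simp add: sum_subtractf)
      have "\<theta> \<le> (\<Sum>j<k. M i\<^sub>0 j)"
        using i\<^sub>0(1) \<sigma>(1) nonneg unfolding \<theta>_def bij_betw_def by (intro member_le_sum) auto
      then show "0 \<le> t - \<theta>" using rows[OF i\<^sub>0(1)] by simp
    qed
    also have "(\<Sum>i<k. \<Sum>j<k. M' i j * c i j) = (\<Sum>i<k. \<Sum>j<k. M i j * c i j) - \<theta> * (\<Sum>i<k. c i (\<sigma> i))"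
      using permutation_matrix_sums(3)[OF \<sigma>(1)] unfolding M'_def by (simp add: left_diff_distrib sum_subtractf)
    finally have "(t - \<theta>) * L \<le> (\<Sum>i<k. \<Sum>j<k. M i j * c i j) - \<theta> * (\<Sum>i<k. c i (\<sigma> i))" .
    moreover have "\<theta> * L \<le> \<theta> * (\<Sum>i<k. c i (\<sigma> i))" using perm[OF \<sigma>(1)] \<open>0 < \<theta>\<close> by simp
    ultimately show ?thesis by (simp add: algebra_simps)
  qed
qed

section \<open>Couplings and the Wasserstein distance\<close>

lemma pmf_map_fst_eq_sum:
  fixes \<pi> :: "('a \<times> 'b::finite) pmf"
  shows "pmf (map_pmf fst \<pi>) x = (\<Sum>y\<in>UNIV. pmf \<pi> (x, y))"
proof -
  have "pmf (map_pmf fst \<pi>) x = measure \<pi> (Pair x ` UNIV)"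
    unfolding pmf_map by (rule arg_cong[where f = "measure \<pi>"]) auto
  also have "\<dots> = (\<Sum>y\<in>UNIV. pmf \<pi> (x, y))"
    by (simp add: measure_measure_pmf_finite sum.reindex inj_on_def)
  finally show ?thesis .
qed

lemma pmf_map_snd_eq_sum:
  fixes \<pi> :: "('a::finite \<times> 'b) pmf"
  shows "pmf (map_pmf snd \<pi>) y = (\<Sum>x\<in>UNIV. pmf \<pi> (x, y))"
proof -
  have "pmf (map_pmf snd \<pi>) y = measure \<pi> ((\<lambda>x. (x, y)) ` UNIV)"
    unfolding pmf_map by (rule arg_cong[where f = "measure \<pi>"]) auto
  also have "\<dots> = (\<Sum>x\<in>UNIV. pmf \<pi> (x, y))"
    by (simp add: measure_measure_pmf_finite sum.reindex inj_on_def)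
  finally show ?thesis .
qed

lemma expectation_pmf_finite_prod:
  fixes \<pi> :: "('a::finite \<times> 'b::finite) pmf"
  shows "measure_pmf.expectation \<pi> f = (\<Sum>x\<in>UNIV. \<Sum>y\<in>UNIV. pmf \<pi> (x, y) * f (x, y))"
  by (subst integral_measure_pmf[of UNIV]) (auto simp: sum.cartesian_product UNIV_Times_UNIV[symmetric] simp del: UNIV_Times_UNIV)

lemma couplings_nonempty: "couplings \<mu> \<nu> \<noteq> {}"
  unfolding couplings_def using map_fst_pair_pmf map_snd_pair_pmf by blast

lemma expectation_dist_nonneg:
  "0 \<le> measure_pmf.expectation (\<pi> :: ('a::metric_space \<times> 'a) pmf) (\<lambda>(x, y). dist x y)"
  by (rule Bochner_Integration.integral_nonneg) (auto simp: case_prod_beta)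

lemma wasserstein_le_coupling_cost:
  "\<pi> \<in> couplings \<mu> \<nu> \<Longrightarrow> wasserstein \<mu> \<nu> \<le> measure_pmf.expectation \<pi> (\<lambda>(x, y). dist x y)"
  unfolding wasserstein_def by (rule cINF_lower) (auto intro: bdd_belowI2[OF expectation_dist_nonneg])

lemma wasserstein_nonneg: "0 \<le> wasserstein \<mu> \<nu>"
  unfolding wasserstein_def by (rule cINF_greatest[OF couplings_nonempty expectation_dist_nonneg])

lemma wasserstein_commute: "wasserstein \<mu> \<nu> = wasserstein \<nu> \<mu>"
proof -
  have "wasserstein \<nu> \<mu> \<le> wasserstein \<mu> \<nu>" for \<mu> \<nu> :: "'a pmf"
    unfolding wasserstein_def[of \<mu>]
  proof (rule cINF_greatest[OF couplings_nonempty])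
    fix \<pi> assume "\<pi> \<in> couplings \<mu> \<nu>"
    then have "map_pmf prod.swap \<pi> \<in> couplings \<nu> \<mu>"
      by (simp add: couplings_def pmf.map_comp comp_def)
    then have "wasserstein \<nu> \<mu> \<le> measure_pmf.expectation (map_pmf prod.swap \<pi>) (\<lambda>(x, y). dist x y)"
      by (rule wasserstein_le_coupling_cost)
    then show "wasserstein \<nu> \<mu> \<le> measure_pmf.expectation \<pi> (\<lambda>(x, y). dist x y)"
      by (simp add: case_prod_unfold dist_commute)
  qed
  then show ?thesis by (metis order_antisym)
qed

lemma couplings_bind_pmf:
  assumes "\<And>x. x \<in> set_pmf p \<Longrightarrow> \<pi> x \<in> couplings \<mu> (\<nu> x)"
  shows "bind_pmf p \<pi> \<in> couplings \<mu> (bind_pmf p \<nu>)"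
  using assms unfolding couplings_def by (simp add: map_bind_pmf cong: bind_pmf_cong)

lemma bind_cond_pmf_snd: "bind_pmf (map_pmf snd \<pi>) (\<lambda>y. cond_pmf \<pi> {w. snd w = y}) = \<pi>"
proof (rule bind_cond_pmf_cancel)
  show "set_pmf \<pi> \<inter> {w. snd w = y} \<noteq> {}" if "y \<in> set_pmf (map_pmf snd \<pi>)" for y
    using that by auto
  show "set_pmf (map_pmf snd \<pi>) \<inter> {y. snd w = y} \<noteq> {}" if "w \<in> set_pmf \<pi>" for w
    using that by auto
  show "measure \<pi> {w. snd w = y} = measure (map_pmf snd \<pi>) {y'. snd w = y'}" if "snd w = y" for y w
    using that by (simp add: measure_map_pmf vimage_def eq_commute)
qed

lemma bind_cond_pmf_fst: "bind_pmf (map_pmf fst \<pi>) (\<lambda>x. cond_pmf \<pi> {w. fst w = x}) = \<pi>"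
proof (rule bind_cond_pmf_cancel)
  show "set_pmf \<pi> \<inter> {w. fst w = x} \<noteq> {}" if "x \<in> set_pmf (map_pmf fst \<pi>)" for x
    using that by auto
  show "set_pmf (map_pmf fst \<pi>) \<inter> {x. fst w = x} \<noteq> {}" if "w \<in> set_pmf \<pi>" for w
    using that by auto
  show "measure \<pi> {w. fst w = x} = measure (map_pmf fst \<pi>) {x'. fst w = x'}" if "fst w = x" for x w
    using that by (simp add: measure_map_pmf vimage_def eq_commute)
qed

lemma couplings_glue:
  assumes "\<pi>\<^sub>1 \<in> couplings \<mu> \<nu>" "\<pi>\<^sub>2 \<in> couplings \<nu> \<eta>"
  obtains \<pi> where "map_pmf (\<lambda>(x, y, z). (x, y)) \<pi> = \<pi>\<^sub>1" "map_pmf (\<lambda>(x, y, z). (y, z)) \<pi> = \<pi>\<^sub>2"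
proof -
  have \<nu>: "\<nu> = map_pmf snd \<pi>\<^sub>1" "\<nu> = map_pmf fst \<pi>\<^sub>2" using assms unfolding couplings_def by auto
  define L where "L y = cond_pmf \<pi>\<^sub>1 {w. snd w = y}" for y
  define R where "R y = cond_pmf \<pi>\<^sub>2 {w. fst w = y}" for y
  define \<pi> where "\<pi> = bind_pmf \<nu> (\<lambda>y. map_pmf (\<lambda>(a, b). (fst a, y, snd b)) (pair_pmf (L y) (R y)))"
  have L_ne: "set_pmf \<pi>\<^sub>1 \<inter> {w. snd w = y} \<noteq> {}" if "y \<in> set_pmf \<nu>" for y
    using that unfolding \<nu>(1) by force
  have R_ne: "set_pmf \<pi>\<^sub>2 \<inter> {w. fst w = y} \<noteq> {}" if "y \<in> set_pmf \<nu>" for y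
    using that unfolding \<nu>(2) by force
  have L: "bind_pmf \<nu> L = \<pi>\<^sub>1" unfolding L_def \<nu>(1) by (rule bind_cond_pmf_snd)
  have R: "bind_pmf \<nu> R = \<pi>\<^sub>2" unfolding R_def \<nu>(2) by (rule bind_cond_pmf_fst)
  have fst_part: "map_pmf (\<lambda>w. (fst (fst w), y)) (pair_pmf (L y) (R y)) = L y" if "y \<in> set_pmf \<nu>" for y
  proof -
    have "map_pmf (\<lambda>w. (fst (fst w), y)) (pair_pmf (L y) (R y))
        = map_pmf (\<lambda>a. (fst a, y)) (map_pmf fst (pair_pmf (L y) (R y)))"
      by (simp add: map_pmf_comp)
    also have "\<dots> = map_pmf (\<lambda>a. (fst a, y)) (L y)" unfolding map_fst_pair_pmf ..
    also have "\<dots> = L y" unfolding L_def using L_ne[OF that] by (intro map_pmf_idI) auto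
    finally show ?thesis .
  qed
  have snd_part: "map_pmf (\<lambda>w. (y, snd (snd w))) (pair_pmf (L y) (R y)) = R y" if "y \<in> set_pmf \<nu>" for y
  proof -
    have "map_pmf (\<lambda>w. (y, snd (snd w))) (pair_pmf (L y) (R y))
        = map_pmf (\<lambda>b. (y, snd b)) (map_pmf snd (pair_pmf (L y) (R y)))"
      by (simp add: map_pmf_comp)
    also have "\<dots> = map_pmf (\<lambda>b. (y, snd b)) (R y)" unfolding map_snd_pair_pmf ..
    also have "\<dots> = R y" unfolding R_def using R_ne[OF that] by (intro map_pmf_idI) auto
    finally show ?thesis .
  qed
  show thesis
  proof (rule that)
    show "map_pmf (\<lambda>(x, y, z). (x, y)) \<pi> = \<pi>\<^sub>1"
      using fst_part by (simp add: \<pi>_def map_bind_pmf map_pmf_comp case_prod_beta L cong: bind_pmf_cong)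
    show "map_pmf (\<lambda>(x, y, z). (y, z)) \<pi> = \<pi>\<^sub>2"
      using snd_part by (simp add: \<pi>_def map_bind_pmf map_pmf_comp case_prod_beta R cong: bind_pmf_cong)
  qed
qed

lemma wasserstein_triangle:
  fixes \<mu> \<nu> \<eta> :: "'a::{finite, metric_space} pmf"
  shows "wasserstein \<mu> \<eta> \<le> wasserstein \<mu> \<nu> + wasserstein \<nu> \<eta>"
proof -
  have "wasserstein \<mu> \<eta> \<le> measure_pmf.expectation \<pi>\<^sub>1 (\<lambda>(x, y). dist x y) + measure_pmf.expectation \<pi>\<^sub>2 (\<lambda>(x, y). dist x y)"
    if couplings: "\<pi>\<^sub>1 \<in> couplings \<mu> \<nu>" "\<pi>\<^sub>2 \<in> couplings \<nu> \<eta>" for \<pi>\<^sub>1 \<pi>\<^sub>2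
  proof -
    obtain \<pi> where \<pi>: "map_pmf (\<lambda>(x, y, z). (x, y)) \<pi> = \<pi>\<^sub>1" "map_pmf (\<lambda>(x, y, z). (y, z)) \<pi> = \<pi>\<^sub>2"
      using couplings_glue[OF couplings] .
    have int: "integrable \<pi> f" for f :: "'a \<times> 'a \<times> 'a \<Rightarrow> real"
      by (rule integrable_measure_pmf_finite) simp
    have "map_pmf (\<lambda>(x, y, z). (x, z)) \<pi> \<in> couplings \<mu> \<eta>"
      using couplings unfolding couplings_def \<pi>[symmetric] by (simp add: pmf.map_comp comp_def case_prod_unfold)
    then have "wasserstein \<mu> \<eta> \<le> measure_pmf.expectation \<pi> (\<lambda>(x, y, z). dist x z)"
      by (auto dest!: wasserstein_le_coupling_cost simp: case_prod_unfold)
    also have "\<dots> \<le> measure_pmf.expectation \<pi> (\<lambda>(x, y, z). dist x y + dist y z)"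
      by (intro integral_mono int) (simp add: case_prod_unfold dist_triangle)
    also have "\<dots> = measure_pmf.expectation \<pi>\<^sub>1 (\<lambda>(x, y). dist x y) + measure_pmf.expectation \<pi>\<^sub>2 (\<lambda>(x, y). dist x y)"
      unfolding \<pi>[symmetric] by (simp add: case_prod_unfold int)
    finally show ?thesis .
  qed
  then have "wasserstein \<mu> \<eta> - measure_pmf.expectation \<pi>\<^sub>2 (\<lambda>(x, y). dist x y) \<le> wasserstein \<mu> \<nu>"
    if "\<pi>\<^sub>2 \<in> couplings \<nu> \<eta>" for \<pi>\<^sub>2
    unfolding wasserstein_def[of \<mu> \<nu>] using that
    by (intro cINF_greatest[OF couplings_nonempty]) (simp add: algebra_simps)
  then have "wasserstein \<mu> \<eta> - wasserstein \<mu> \<nu> \<le> wasserstein \<nu> \<eta>"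
    unfolding wasserstein_def[of \<nu> \<eta>] by (intro cINF_greatest[OF couplings_nonempty]) (simp add: algebra_simps)
  then show ?thesis by simp
qed

section \<open>Matching distance and Wasserstein distance\<close>

lemma finite_matching_costs:
  fixes U V :: "'a::{finite, metric_space} multiset"
  shows "finite {(\<Sum>i<size U. dist (xs ! i) (ys ! i)) | xs ys. mset xs = U \<and> mset ys = V}"
proof -
  let ?cost = "\<lambda>(xs, ys). \<Sum>i<size U. dist (xs ! i) (ys ! i)"
  let ?lists = "\<lambda>n. {xs :: 'a list. set xs \<subseteq> UNIV \<and> length xs = n}"
  have "{(\<Sum>i<size U. dist (xs ! i) (ys ! i)) | xs ys. mset xs = U \<and> mset ys = V}
      \<subseteq> ?cost ` (?lists (size U) \<times> ?lists (size V))"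
  proof
    fix c assume "c \<in> {(\<Sum>i<size U. dist (xs ! i) (ys ! i)) | xs ys. mset xs = U \<and> mset ys = V}"
    then obtain xs ys where c: "c = ?cost (xs, ys)" and "mset xs = U" "mset ys = V" by auto
    then have "(xs, ys) \<in> ?lists (size U) \<times> ?lists (size V)" by auto
    then show "c \<in> ?cost ` (?lists (size U) \<times> ?lists (size V))" using c by (rule rev_image_eqI)
  qed
  moreover have "finite (?cost ` (?lists (size U) \<times> ?lists (size V)))"
    by (intro finite_imageI finite_cartesian_product finite_lists_length_eq) auto
  ultimately show ?thesis by (rule finite_subset)
qed

lemma dk_le_matching:
  fixes xs ys :: "'a::{finite, metric_space} list"
  shows "dk (mset xs) (mset ys) \<le> (\<Sum>i<length xs. dist (xs ! i) (ys ! i))"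
  unfolding dk_def by (rule Min_le[OF finite_matching_costs]) auto

lemma dk_obtain_matching:
  fixes U V :: "'a::{finite, metric_space} multiset"
  obtains xs ys where "mset xs = U" "mset ys = V" "dk U V = (\<Sum>i<size U. dist (xs ! i) (ys ! i))"
proof -
  obtain xs ys where "mset xs = U" "mset ys = V" using ex_mset by metis
  then have "{(\<Sum>i<size U. dist (xs ! i) (ys ! i)) | xs ys. mset xs = U \<and> mset ys = V} \<noteq> {}" by blast
  from Min_in[OF finite_matching_costs this] show thesis using that unfolding dk_def by blast
qed

lemma dk_le_permuted_matching:
  fixes xs ys :: "'a::{finite, metric_space} list"
  assumes "length xs = k" "length ys = k" "bij_betw \<sigma> {..<k} {..<k}"
  shows "dk (mset xs) (mset ys) \<le> (\<Sum>i<k. dist (xs ! i) (ys ! \<sigma> i))"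
proof -
  define zs where "zs = map (\<lambda>i. ys ! \<sigma> i) [0..<k]"
  have "mset zs = image_mset (nth ys) (image_mset \<sigma> (mset_set {..<k}))"
    unfolding zs_def by (simp add: image_mset.compositionality comp_def atLeast0LessThan)
  also have "image_mset \<sigma> (mset_set {..<k}) = mset_set {..<k}"
    using assms(3) by (simp add: image_mset_mset_set bij_betw_def)
  also have "image_mset (nth ys) (mset_set {..<k}) = mset ys"
    using assms(2) by (metis map_nth mset_map mset_upt atLeast0LessThan)
  finally have "mset zs = mset ys" .
  moreover have "dk (mset xs) (mset zs) \<le> (\<Sum>i<k. dist (xs ! i) (ys ! \<sigma> i))"
    using dk_le_matching[of xs zs] assms(1) by (simp add: zs_def)
  ultimately show ?thesis by simp
qed

definition matching_coupling :: "'a list \<Rightarrow> 'a list \<Rightarrow> ('a \<times> 'a) pmf" where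
  "matching_coupling xs ys = map_pmf (\<lambda>i. (xs ! i, ys ! i)) (pmf_of_set {..<length xs})"

lemma map_nth_pmf_of_set:
  assumes "xs \<noteq> []"
  shows "map_pmf (nth xs) (pmf_of_set {..<length xs}) = pmf_of_multiset (mset xs)"
proof -
  have "map_pmf (nth xs) (pmf_of_set {..<length xs}) = pmf_of_multiset (image_mset (nth xs) (mset_set {..<length xs}))"
    using assms by (intro map_pmf_of_set) auto
  also have "image_mset (nth xs) (mset_set {..<length xs}) = mset xs"
    by (metis map_nth mset_map mset_upt atLeast0LessThan)
  finally show ?thesis .
qed

lemma matching_coupling_couplings:
  assumes "length ys = length xs" "xs \<noteq> []"
  shows "matching_coupling xs ys \<in> couplings (DT (mset xs)) (DT (mset ys))"
proof -
  have "ys \<noteq> []" using assms by auto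
  then show ?thesis
    using assms map_nth_pmf_of_set[of xs] map_nth_pmf_of_set[of ys]
    unfolding couplings_def matching_coupling_def DT_def by (simp add: pmf.map_comp comp_def)
qed

lemma expectation_matching_coupling:
  assumes "xs \<noteq> []"
  shows "measure_pmf.expectation (matching_coupling xs ys) f = (\<Sum>i<length xs. f (xs ! i, ys ! i)) / length xs"
  using assms unfolding matching_coupling_def integral_map_pmf by (subst integral_pmf_of_set) auto

lemma dk_obtain_coupling:
  fixes U V :: "'a::{finite, metric_space} multiset"
  assumes "size V = size U" "U \<noteq> {#}"
  obtains \<pi> where "\<pi> \<in> couplings (DT U) (DT V)"
    "size U * measure_pmf.expectation \<pi> (\<lambda>(x, y). dist x y) = dk U V"
proof -
  obtain xs ys where xs: "mset xs = U" and ys: "mset ys = V"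
    and dk: "dk U V = (\<Sum>i<size U. dist (xs ! i) (ys ! i))"
    by (rule dk_obtain_matching)
  have "length ys = length xs" "xs \<noteq> []" "size U = length xs" using xs ys assms by auto
  show thesis
  proof (rule that)
    show "matching_coupling xs ys \<in> couplings (DT U) (DT V)"
      using matching_coupling_couplings[OF \<open>length ys = length xs\<close> \<open>xs \<noteq> []\<close>] xs ys by simp
    show "size U * measure_pmf.expectation (matching_coupling xs ys) (\<lambda>(x, y). dist x y) = dk U V"
      using expectation_matching_coupling[OF \<open>xs \<noteq> []\<close>] \<open>size U = length xs\<close> \<open>xs \<noteq> []\<close> dk by simp
  qed
qed

lemma sum_nth_eq_sum_count:
  fixes f :: "'a::finite \<Rightarrow> real"
  shows "(\<Sum>i<length xs. f (xs ! i)) = (\<Sum>y\<in>UNIV. count (mset xs) y * f y)"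
proof (induction xs)
  case (Cons x xs)
  have "(\<Sum>i<length (x # xs). f ((x # xs) ! i)) = f x + (\<Sum>i<length xs. f (xs ! i))"
    unfolding length_Cons sum.lessThan_Suc_shift by simp
  also have "\<dots> = (\<Sum>y\<in>UNIV. of_bool (y = x) * f y + count (mset xs) y * f y)"
    using Cons by (simp add: sum.distrib)
  also have "\<dots> = (\<Sum>y\<in>UNIV. count (mset (x # xs)) y * f y)"
    by (intro sum.cong) (auto simp: algebra_simps)
  finally show ?case .
qed simp

lemma sum_nth_div_count:
  fixes f :: "'a::finite \<Rightarrow> real"
  assumes "\<And>y. y \<notin> set xs \<Longrightarrow> f y = 0"
  shows "(\<Sum>i<length xs. f (xs ! i) / count (mset xs) (xs ! i)) = (\<Sum>y\<in>UNIV. f y)"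
proof -
  have "(\<Sum>i<length xs. f (xs ! i) / count (mset xs) (xs ! i))
      = (\<Sum>y\<in>UNIV. count (mset xs) y * (f y / count (mset xs) y))"
    by (rule sum_nth_eq_sum_count)
  also have "\<dots> = (\<Sum>y\<in>UNIV. f y)"
    using assms by (intro sum.cong) auto
  finally show ?thesis .
qed

lemma coupling_position_matrix:
  fixes xs ys :: "'a::finite list"
  assumes len: "length xs = k" "length ys = k" "0 < k"
    and \<pi>: "\<pi> \<in> couplings (DT (mset xs)) (DT (mset ys))"
    \<comment> \<open>the mass \<pi>(x, y) is spread evenly over the positions i, j with xs ! i = x and ys ! j = y\<close>
    and M_def: "\<And>i j. M i j = k * pmf \<pi> (xs ! i, ys ! j) / (count (mset xs) (xs ! i) * count (mset ys) (ys ! j))"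
  shows "\<And>i. i < k \<Longrightarrow> (\<Sum>j<k. M i j) = 1"
    and "\<And>j. j < k \<Longrightarrow> (\<Sum>i<k. M i j) = 1"
    and "(\<Sum>i<k. \<Sum>j<k. M i j * g (xs ! i) (ys ! j)) = k * (\<Sum>x\<in>UNIV. \<Sum>y\<in>UNIV. pmf \<pi> (x, y) * g x y)"
proof -
  have ne: "mset xs \<noteq> {#}" "mset ys \<noteq> {#}" using len by auto
  have marg: "map_pmf fst \<pi> = pmf_of_multiset (mset xs)" "map_pmf snd \<pi> = pmf_of_multiset (mset ys)"
    using \<pi> unfolding couplings_def DT_def by auto
  have fst: "pmf (map_pmf fst \<pi>) x = count (mset xs) x / k"
    and snd: "pmf (map_pmf snd \<pi>) y = count (mset ys) y / k" for x y
    using marg ne len by auto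
  have "fst ` set_pmf \<pi> = set xs" "snd ` set_pmf \<pi> = set ys"
    using arg_cong[OF marg(1), of set_pmf] arg_cong[OF marg(2), of set_pmf] ne by auto
  then have supp: "pmf \<pi> (x, y) = 0" if "x \<notin> set xs \<or> y \<notin> set ys" for x y
    using that by (force simp: set_pmf_iff)
  have pos: "0 < count (mset xs) (xs ! i)" "0 < count (mset ys) (ys ! i)" if "i < k" for i
    using that len by auto
  show "(\<Sum>j<k. M i j) = 1" if "i < k" for i
  proof -
    have "(\<Sum>j<k. M i j) = k / count (mset xs) (xs ! i) * (\<Sum>j<k. pmf \<pi> (xs ! i, ys ! j) / count (mset ys) (ys ! j))"
      by (simp add: M_def sum_distrib_left)
    also have "(\<Sum>j<k. pmf \<pi> (xs ! i, ys ! j) / count (mset ys) (ys ! j)) = pmf (map_pmf fst \<pi>) (xs ! i)"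
      using sum_nth_div_count[of ys "\<lambda>y. pmf \<pi> (xs ! i, y)"] supp len by (simp add: pmf_map_fst_eq_sum)
    finally show ?thesis using fst pos(1)[OF that] len by simp
  qed
  show "(\<Sum>i<k. M i j) = 1" if "j < k" for j
  proof -
    have "(\<Sum>i<k. M i j) = k / count (mset ys) (ys ! j) * (\<Sum>i<k. pmf \<pi> (xs ! i, ys ! j) / count (mset xs) (xs ! i))"
      by (simp add: M_def sum_distrib_left mult.commute)
    also have "(\<Sum>i<k. pmf \<pi> (xs ! i, ys ! j) / count (mset xs) (xs ! i)) = pmf (map_pmf snd \<pi>) (ys ! j)"
      using sum_nth_div_count[of xs "\<lambda>x. pmf \<pi> (x, ys ! j)"] supp len by (simp add: pmf_map_snd_eq_sum)
    finally show ?thesis using snd pos(2)[OF that] len by simp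
  qed
  have "(\<Sum>i<k. \<Sum>j<k. M i j * g (xs ! i) (ys ! j))
      = k * (\<Sum>i<k. (\<Sum>j<k. pmf \<pi> (xs ! i, ys ! j) * g (xs ! i) (ys ! j) / count (mset ys) (ys ! j))
                     / count (mset xs) (xs ! i))"
    by (simp add: M_def sum_distrib_left sum_divide_distrib mult.commute mult.left_commute)
  also have "\<dots> = k * (\<Sum>i<k. (\<Sum>y\<in>UNIV. pmf \<pi> (xs ! i, y) * g (xs ! i) y) / count (mset xs) (xs ! i))"
    using sum_nth_div_count[of ys "\<lambda>y. pmf \<pi> (_, y) * g _ y"] supp len by simp
  also have "\<dots> = k * (\<Sum>x\<in>UNIV. \<Sum>y\<in>UNIV. pmf \<pi> (x, y) * g x y)"
    using sum_nth_div_count[of xs "\<lambda>x. \<Sum>y\<in>UNIV. pmf \<pi> (x, y) * g x y"] supp len by simp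
  finally show "(\<Sum>i<k. \<Sum>j<k. M i j * g (xs ! i) (ys ! j)) = k * (\<Sum>x\<in>UNIV. \<Sum>y\<in>UNIV. pmf \<pi> (x, y) * g x y)" .
qed

lemma dk_le_coupling_cost:
  fixes U V :: "'a::{finite, metric_space} multiset"
  assumes "size V = size U" "U \<noteq> {#}" "\<pi> \<in> couplings (DT U) (DT V)"
  shows "dk U V \<le> size U * measure_pmf.expectation \<pi> (\<lambda>(x, y). dist x y)"
proof -
  obtain xs ys where xs: "mset xs = U" and ys: "mset ys = V" using ex_mset by metis
  define k where "k = size U"
  have len: "length xs = k" "length ys = k" "0 < k" using xs ys assms(1,2) by (auto simp: k_def)
  have \<pi>: "\<pi> \<in> couplings (DT (mset xs)) (DT (mset ys))" using assms(3) xs ys by simp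
  define M where "M i j = k * pmf \<pi> (xs ! i, ys ! j) / (count (mset xs) (xs ! i) * count (mset ys) (ys ! j))" for i j
  note M = coupling_position_matrix[OF len \<pi> M_def]
  have "1 * dk U V \<le> (\<Sum>i<k. \<Sum>j<k. M i j * dist (xs ! i) (ys ! j))"
  proof (rule doubly_stochastic_cost_ge[of k "dk U V" "\<lambda>i j. dist (xs ! i) (ys ! j)" M 1])
    show "dk U V \<le> (\<Sum>i<k. dist (xs ! i) (ys ! \<sigma> i))" if "bij_betw \<sigma> {..<k} {..<k}" for \<sigma>
      using dk_le_permuted_matching[OF len(1,2) that] xs ys by simp
    show "0 \<le> M i j" for i j unfolding M_def by simp
  qed (use M(1,2) in auto)
  also have "\<dots> = k * measure_pmf.expectation \<pi> (\<lambda>(x, y). dist x y)"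
    using M(3)[of dist] by (simp add: expectation_pmf_finite_prod)
  finally show ?thesis by (simp add: k_def)
qed

lemma dk_eq_wasserstein:
  fixes U V :: "'a::{finite, metric_space} multiset"
  assumes "size V = size U" "U \<noteq> {#}"
  shows "dk U V = size U * wasserstein (DT U) (DT V)"
proof (rule antisym)
  have pos: "0 < real (size U)" using assms(2) by (simp add: nonempty_has_size)
  have "dk U V / size U \<le> wasserstein (DT U) (DT V)"
    unfolding wasserstein_def using dk_le_coupling_cost[OF assms] pos
    by (intro cINF_greatest[OF couplings_nonempty]) (simp add: pos_divide_le_eq mult.commute)
  then show "dk U V \<le> size U * wasserstein (DT U) (DT V)"
    using pos by (simp add: pos_divide_le_eq mult.commute)
  obtain \<pi> where "\<pi> \<in> couplings (DT U) (DT V)"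
    and "size U * measure_pmf.expectation \<pi> (\<lambda>(x, y). dist x y) = dk U V"
    using dk_obtain_coupling[OF assms] .
  then show "size U * wasserstein (DT U) (DT V) \<le> dk U V"
    by (metis wasserstein_le_coupling_cost mult_left_mono of_nat_0_le_iff)
qed

lemma dk_triangle:
  fixes U V X :: "'a::{finite, metric_space} multiset"
  assumes "size V = size U" "size X = size U" "U \<noteq> {#}"
  shows "dk U X \<le> dk U V + dk V X"
proof -
  have "V \<noteq> {#}" using assms by auto
  have "dk U X = size U * wasserstein (DT U) (DT X)" using assms by (simp add: dk_eq_wasserstein)
  also have "\<dots> \<le> size U * (wasserstein (DT U) (DT V) + wasserstein (DT V) (DT X))"
    by (intro mult_left_mono wasserstein_triangle) simp
  also have "\<dots> = dk U V + dk V X"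
    using assms \<open>V \<noteq> {#}\<close> by (simp add: dk_eq_wasserstein distrib_left)
  finally show ?thesis .
qed

section \<open>The k-RP cost\<close>

lemma map_nth_replicate_pmf: "i < n \<Longrightarrow> map_pmf (\<lambda>xs. xs ! i) (replicate_pmf n p) = p"
proof (induction n arbitrary: i)
  case (Suc n)
  then show ?case
    by (cases i) (simp_all add: map_bind_pmf map_pmf_def[symmetric] map_pmf_comp bind_return_pmf')
qed simp

lemma bind_replicate_pmf_empirical:
  assumes "0 < n"
  shows "bind_pmf (replicate_pmf n p) (\<lambda>xs. DT (mset xs)) = p"
proof -
  have "bind_pmf (replicate_pmf n p) (\<lambda>xs. DT (mset xs))
      = bind_pmf (replicate_pmf n p) (\<lambda>xs. bind_pmf (pmf_of_set {..<n}) (\<lambda>i. return_pmf (xs ! i)))"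
  proof (rule bind_pmf_cong[OF refl])
    fix xs assume "xs \<in> set_pmf (replicate_pmf n p)"
    then have "length xs = n" by (simp add: set_replicate_pmf)
    then show "DT (mset xs) = bind_pmf (pmf_of_set {..<n}) (\<lambda>i. return_pmf (xs ! i))"
      using assms map_nth_pmf_of_set[of xs] unfolding DT_def map_pmf_def by auto
  qed
  also have "\<dots> = bind_pmf (pmf_of_set {..<n}) (\<lambda>i. map_pmf (\<lambda>xs. xs ! i) (replicate_pmf n p))"
    unfolding map_pmf_def by (rule bind_commute_pmf)
  also have "\<dots> = bind_pmf (pmf_of_set {..<n}) (\<lambda>_. p)"
  proof (rule bind_pmf_cong[OF refl])
    have "set_pmf (pmf_of_set {..<n}) = {..<n}" using assms by (intro set_pmf_of_set) auto
    then show "map_pmf (\<lambda>xs. xs ! i) (replicate_pmf n p) = p" if "i \<in> set_pmf (pmf_of_set {..<n})" for i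
      using that by (simp add: map_nth_replicate_pmf)
  qed
  also have "\<dots> = p" by simp
  finally show ?thesis .
qed

lemma finite_set_replicate_pmf: "finite (set_pmf (replicate_pmf n (p :: 'a::finite pmf)))"
proof -
  have "set_pmf (replicate_pmf n p) \<subseteq> {xs. set xs \<subseteq> UNIV \<and> length xs = n}"
    by (auto simp: set_replicate_pmf)
  then show ?thesis by (rule finite_subset) (use finite_lists_length_eq[of "UNIV :: 'a set" n] in simp)
qed

lemma rp_cost_le_dk_plus_rp_cost:
  fixes S Q :: "'a::{finite, metric_space} multiset"
  assumes "size S = k" "size Q = k" "0 < k"
  shows "rp_cost k P S \<le> dk S Q + rp_cost k P Q"
proof -
  have fin: "finite (set_pmf (Pk k P))"
    unfolding Pk_def by (simp add: finite_set_replicate_pmf)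
  have "rp_cost k P S \<le> measure_pmf.expectation (Pk k P) (\<lambda>X. dk S Q + dk Q X)"
    unfolding rp_cost_def
  proof (rule integral_mono_AE)
    show "AE X in measure_pmf (Pk k P). dk S X \<le> dk S Q + dk Q X"
      using assms by (intro AE_pmfI dk_triangle) (auto simp: Pk_def set_replicate_pmf)
  qed (auto intro: integrable_measure_pmf_finite[OF fin])
  also have "\<dots> = dk S Q + rp_cost k P Q"
    unfolding rp_cost_def by (simp add: integrable_measure_pmf_finite[OF fin])
  finally show ?thesis .
qed

lemma wasserstein_le_rp_cost:
  fixes Q :: "'a::{finite, metric_space} multiset"
  assumes "size Q = k" "0 < k"
  shows "k * wasserstein (DT Q) P \<le> rp_cost k P Q"
proof -
  define R where "R = replicate_pmf k P"
  have "\<exists>\<pi> \<in> couplings (DT Q) (DT (mset X)). k * measure_pmf.expectation \<pi> (\<lambda>(x, y). dist x y) = dk Q (mset X)"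
    if "X \<in> set_pmf R" for X
  proof -
    have "size (mset X) = size Q" "Q \<noteq> {#}" using that assms by (auto simp: R_def set_replicate_pmf)
    then show ?thesis using assms(1) by (metis dk_obtain_coupling)
  qed
  then obtain \<kappa> where \<kappa>: "\<And>X. X \<in> set_pmf R \<Longrightarrow> \<kappa> X \<in> couplings (DT Q) (DT (mset X))"
    "\<And>X. X \<in> set_pmf R \<Longrightarrow> k * measure_pmf.expectation (\<kappa> X) (\<lambda>(x, y). dist x y) = dk Q (mset X)"
    by metis
  have "bind_pmf R \<kappa> \<in> couplings (DT Q) (bind_pmf R (\<lambda>X. DT (mset X)))"
    by (rule couplings_bind_pmf) (rule \<kappa>(1))
  then have "bind_pmf R \<kappa> \<in> couplings (DT Q) P"
    unfolding R_def bind_replicate_pmf_empirical[OF assms(2)] .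
  then have "k * wasserstein (DT Q) P \<le> k * measure_pmf.expectation (bind_pmf R \<kappa>) (\<lambda>(x, y). dist x y)"
    by (intro mult_left_mono wasserstein_le_coupling_cost) auto
  also have "\<dots> = (\<Sum>X\<in>set_pmf R. pmf R X * (k * measure_pmf.expectation (\<kappa> X) (\<lambda>(x, y). dist x y)))"
    by (subst pmf_expectation_bind[of "set_pmf R"])
      (auto simp: R_def finite_set_replicate_pmf sum_distrib_left mult.left_commute)
  also have "\<dots> = (\<Sum>X\<in>set_pmf R. pmf R X * dk Q (mset X))"
    using \<kappa>(2) by simp
  also have "\<dots> = rp_cost k P Q"
    unfolding rp_cost_def Pk_def R_def integral_map_pmf
    by (subst integral_measure_pmf[of "set_pmf (replicate_pmf k P)"]) (auto simp: finite_set_replicate_pmf)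
  finally show ?thesis .
qed

theorem theorem5:
  fixes P :: "'a::{finite, metric_space} pmf"
    and k :: nat and Opt S :: "'a multiset" and \<rho> :: real
  assumes "k \<ge> 1"
    and "Opt \<in> mset_k k"
    and "\<forall>T\<in>mset_k k. rp_cost k P Opt \<le> rp_cost k P T"
    and "\<rho> \<ge> 1"
    and "S \<in> mset_k k"
    and "wasserstein (DT S) P \<le> \<rho> * (INF T\<in>mset_k k. wasserstein (DT T) P)"
  shows "rp_cost k P S \<le> (\<rho> + 2) * rp_cost k P Opt"
proof -
  have k: "0 < k" and S: "size S = k" and Opt: "size Opt = k"
    using assms(1,2,5) unfolding mset_k_def by auto
  have "(INF T\<in>mset_k k. wasserstein (DT T) P) \<le> wasserstein (DT Opt) P"
    using assms(2) by (intro cINF_lower bdd_belowI2[OF wasserstein_nonneg])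
  then have approx: "wasserstein (DT S) P \<le> \<rho> * wasserstein (DT Opt) P"
    using assms(4) by (intro order_trans[OF assms(6)] mult_left_mono) auto
  have lower: "k * wasserstein (DT Opt) P \<le> rp_cost k P Opt"
    using Opt k by (rule wasserstein_le_rp_cost)
  have "rp_cost k P S \<le> dk S Opt + rp_cost k P Opt"
    using S Opt k by (rule rp_cost_le_dk_plus_rp_cost)
  also have "dk S Opt \<le> k * (wasserstein (DT S) P + wasserstein (DT Opt) P)"
    using dk_eq_wasserstein[of Opt S] wasserstein_triangle[of "DT S" "DT Opt" P] S Opt k
    by (simp add: wasserstein_commute[of P] nonempty_has_size)
  also have "\<dots> \<le> (\<rho> + 1) * (k * wasserstein (DT Opt) P)"
    using mult_left_mono[OF approx, of k] by (simp add: algebra_simps)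
  also have "\<dots> \<le> (\<rho> + 1) * rp_cost k P Opt"
    using lower assms(4) by (intro mult_left_mono) auto
  finally show ?thesis by (simp add: algebra_simps)
qed

end
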